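(* Let $E=(L^0)^{\mathbb N}$ be the $L^0$-module of all sequences $(x_n)_{n\in\mathbb N}$ in $L^0$, and let $\mathscr P=\{p_k:k\in\mathbb N\}$ with $p_k((x_n))=|x_k|$. Let $E^*_0$ be the set of $L^0$-linear maps $f:E\to L^0$ which are continuous from $(E,\mathscr T_0(\mathscr P))$ to $(L^0,\mathscr T_0(\{|\cdot|\}))$. Then a map $f:E\to L^0$ belongs to $E^*_0$ if and only if there exist $m\in\mathbb N$ and $x_1,\dots,x_m\in L^0$ such that $f((y_n))=\sum_{n=1}^m x_ny_n$ for all $(y_n)\in E$.
   Context: $L^0$ is the ring of real-valued measurable functions on a probability space modulo a.e. equality, ordered a.e.; $L^0_{++}=\{r\in L^0:r>0\text{ a.e.}\}$. For a collection $\mathscr P$ of $L^0$-seminorms (maps $p:E\to L^0_+$ with $p(rx)=|r|p(x)$, $p(x+y)\le p(x)+p(y)$) on an $L^0$-module $E$, $\mathscr T_0(\mathscr P)$ is the topology generated by the base of sets $\{y\in E:\sup_{p\in N}p(x-y)<r\}$ with $x\in E$, $N\subset\mathscr P$ finite, $r\in L^0_{++}$. On $L^0$, $\mathscr T_0(\{|\cdot|\})$ is the topology with base $\{s\in L^0:|s-t|<r\}$, $t\in L^0$, $r\in L^0_{++}$. *)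

theory Defs
  imports "HOL-Probability.Probability"
begin

text \<open>L0 is represented by (representatives) Borel measurable functions; equality in L0
  is almost-everywhere equality w.r.t. the probability measure M.\<close>

definition L0pp :: "'a measure \<Rightarrow> ('a \<Rightarrow> real) set" where
  "L0pp M = {r \<in> borel_measurable M. AE \<omega> in M. 0 < r \<omega>}"

definition Eseq :: "'a measure \<Rightarrow> (nat \<Rightarrow> 'a \<Rightarrow> real) set" where
  "Eseq M = {x. \<forall>n. x n \<in> borel_measurable M}"

text \<open>The supremum of finitely many nonnegative functions is the pointwise maximum
  (with 0 for N empty); a strict inequality in L0 is read almost everywhere.\<close>
definition T0 :: "'a measure \<Rightarrow> 'e::minus set \<Rightarrow> ('e \<Rightarrow> 'a \<Rightarrow> real) set \<Rightarrow> 'e topology" where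
  "T0 M C P = topology_generated_by
     {{y \<in> C. AE \<omega> in M. Max (insert 0 {p (x - y) \<omega> | p. p \<in> N}) < r \<omega>}
       | x N r. x \<in> C \<and> finite N \<and> N \<subseteq> P \<and> r \<in> L0pp M}"

definition Pseq :: "((nat \<Rightarrow> 'a \<Rightarrow> real) \<Rightarrow> 'a \<Rightarrow> real) set" where
  "Pseq = {(\<lambda>x \<omega>. \<bar>x k \<omega>\<bar>) | k. True}"

definition absL0 :: "('a \<Rightarrow> real) \<Rightarrow> 'a \<Rightarrow> real" where
  "absL0 s = (\<lambda>\<omega>. \<bar>s \<omega>\<bar>)"

definition L0linear :: "'a measure \<Rightarrow> ((nat \<Rightarrow> 'a \<Rightarrow> real) \<Rightarrow> 'a \<Rightarrow> real) \<Rightarrow> bool" where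
  "L0linear M f \<longleftrightarrow>
     (\<forall>r \<in> borel_measurable M. \<forall>s \<in> borel_measurable M. \<forall>y \<in> Eseq M. \<forall>z \<in> Eseq M.
        AE \<omega> in M. f (\<lambda>n \<omega>'. r \<omega>' * y n \<omega>' + s \<omega>' * z n \<omega>') \<omega> = r \<omega> * f y \<omega> + s \<omega> * f z \<omega>)"

definition dual0 :: "'a measure \<Rightarrow> ((nat \<Rightarrow> 'a \<Rightarrow> real) \<Rightarrow> 'a \<Rightarrow> real) set" where
  "dual0 M = {f. L0linear M f \<and>
     continuous_map (T0 M (Eseq M) Pseq) (T0 M (borel_measurable M) {absL0}) f}"

end

theory Submission imports Defs begin

text \<open>A continuous L0-linear \<open>f\<close> maps some basic neighbourhood of 0, cut out by finitely many
  coordinates \<open>k < m\<close> and a radius \<open>r\<close>, into the unit ball around \<open>f 0 = 0\<close>. Every multiple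
  \<open>j y\<close> of a sequence \<open>y\<close> vanishing below \<open>m\<close> lies in that neighbourhood, so
  \<open>j \<bar>f y\<bar> < 1\<close> a.e. for all \<open>j\<close>, which forces \<open>f y = 0\<close>; expanding an arbitrary \<open>y\<close> along the
  unit sequences then gives \<open>f y = (\<Sum>n<m. f e\<^sub>n * y\<^sub>n)\<close>. Conversely, a finite sum is L0-linear
  and continuous, because \<open>\<bar>\<Sum>n<m. x\<^sub>n * z\<^sub>n\<bar> < r (1 + \<Sum>n<m. \<bar>x\<^sub>n\<bar>)\<close> whenever all
  \<open>\<bar>z\<^sub>n\<bar> < r\<close>.\<close>

section \<open>The topology of a family of L0-seminorms\<close>

definition sup_seminorms :: "('e \<Rightarrow> 'a \<Rightarrow> real) set \<Rightarrow> 'e \<Rightarrow> 'a \<Rightarrow> real" where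
  "sup_seminorms N v \<omega> = Max (insert 0 {p v \<omega> | p. p \<in> N})"

lemma sup_seminorms_less_iff:
  assumes "finite N"
  shows "sup_seminorms N v \<omega> < c \<longleftrightarrow> 0 < c \<and> (\<forall>p\<in>N. p v \<omega> < c)"
proof -
  have "{p v \<omega> | p. p \<in> N} = (\<lambda>p. p v \<omega>) ` N" by auto
  then show ?thesis unfolding sup_seminorms_def using assms by (simp add: Max_less_iff)
qed

lemma sup_seminorms_ge:
  assumes "finite N"
  shows "0 \<le> sup_seminorms N v \<omega>" and "p \<in> N \<Longrightarrow> p v \<omega> \<le> sup_seminorms N v \<omega>"
  unfolding sup_seminorms_def using assms by (auto intro!: Max_ge)

lemma borel_measurable_sup_seminorms:
  assumes "finite N" "\<forall>p\<in>N. p v \<in> borel_measurable M"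
  shows "sup_seminorms N v \<in> borel_measurable M"
proof -
  have e: "\<And>\<omega>. insert 0 {p v \<omega> | p. p \<in> N} = (\<lambda>p. p v \<omega>) ` insert (\<lambda>_ _. 0) N"
    by auto
  show ?thesis unfolding sup_seminorms_def e
    by (rule borel_measurable_Max) (use assms in auto)
qed

lemma L0pp_const: "0 < c \<Longrightarrow> (\<lambda>_. c) \<in> L0pp M"
  unfolding L0pp_def by simp

lemma L0pp_min:
  assumes "r \<in> L0pp M" "s \<in> L0pp M"
  shows "(\<lambda>\<omega>. min (r \<omega>) (s \<omega>)) \<in> L0pp M"
proof -
  have "AE \<omega> in M. 0 < r \<omega>" "AE \<omega> in M. 0 < s \<omega>"
    using assms unfolding L0pp_def by simp_all
  then have "AE \<omega> in M. 0 < min (r \<omega>) (s \<omega>)" by eventually_elim simp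
  with assms show ?thesis unfolding L0pp_def by (simp add: borel_measurable_min)
qed

lemma L0pp_divide:
  assumes "r \<in> L0pp M" "g \<in> borel_measurable M" "\<And>\<omega>. 0 < g \<omega>"
  shows "(\<lambda>\<omega>. r \<omega> / g \<omega>) \<in> L0pp M"
proof -
  have "AE \<omega> in M. 0 < r \<omega>" using assms(1) unfolding L0pp_def by simp
  then have "AE \<omega> in M. 0 < r \<omega> / g \<omega>" by eventually_elim (simp add: assms(3))
  with assms(1,2) show ?thesis unfolding L0pp_def by (simp add: borel_measurable_divide)
qed

definition T0_ball ::
    "'a measure \<Rightarrow> 'e::minus set \<Rightarrow> ('e \<Rightarrow> 'a \<Rightarrow> real) set \<Rightarrow> 'e \<Rightarrow> ('a \<Rightarrow> real) \<Rightarrow> 'e set" where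
  "T0_ball M C N x r = {y \<in> C. AE \<omega> in M. sup_seminorms N (x - y) \<omega> < r \<omega>}"

lemma T0_eq_generated_by_balls:
  "T0 M C P = topology_generated_by
     {T0_ball M C N x r | x N r. x \<in> C \<and> finite N \<and> N \<subseteq> P \<and> r \<in> L0pp M}"
  unfolding T0_def T0_ball_def sup_seminorms_def by simp

lemma T0_ball_subset: "T0_ball M C N x r \<subseteq> C"
  unfolding T0_ball_def by blast

lemma T0_ball_antimono:
  assumes "finite N'" "N \<subseteq> N'"
  shows "T0_ball M C N' x r \<subseteq> T0_ball M C N x r"
proof
  fix y assume "y \<in> T0_ball M C N' x r"
  then have "y \<in> C" and y: "AE \<omega> in M. sup_seminorms N' (x - y) \<omega> < r \<omega>"
    unfolding T0_ball_def by simp_all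
  have "finite N" using assms by (rule finite_subset[rotated])
  have "AE \<omega> in M. sup_seminorms N (x - y) \<omega> < r \<omega>"
    using y by eventually_elim (use assms \<open>finite N\<close> in \<open>auto simp: sup_seminorms_less_iff\<close>)
  with \<open>y \<in> C\<close> show "y \<in> T0_ball M C N x r" unfolding T0_ball_def by simp
qed

lemma openin_T0_ball:
  "x \<in> C \<Longrightarrow> finite N \<Longrightarrow> N \<subseteq> P \<Longrightarrow> r \<in> L0pp M \<Longrightarrow> openin (T0 M C P) (T0_ball M C N x r)"
  unfolding T0_eq_generated_by_balls by (rule topology_generated_by_Basis) blast

lemma topspace_T0: "topspace (T0 M C P) = C"
proof -
  let ?B = "{T0_ball M C N x r | x N r. x \<in> C \<and> finite N \<and> N \<subseteq> P \<and> r \<in> L0pp M}"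
  have "\<Union>?B \<subseteq> C" by (rule Union_least) (auto simp: T0_ball_def)
  moreover have "C \<subseteq> \<Union>?B"
  proof
    fix x assume "x \<in> C"
    then have "x \<in> T0_ball M C {} x (\<lambda>_. 1)" by (simp add: T0_ball_def sup_seminorms_less_iff)
    moreover have "T0_ball M C {} x (\<lambda>_. 1) \<in> ?B"
      using \<open>x \<in> C\<close> L0pp_const[of 1 M] by (intro CollectI exI) auto
    ultimately show "x \<in> \<Union>?B" by (rule UnionI[rotated])
  qed
  ultimately show ?thesis
    unfolding T0_eq_generated_by_balls topology_generated_by_topspace by (rule subset_antisym)
qed

definition L0_seminorms :: "'a measure \<Rightarrow> 'e::minus set \<Rightarrow> ('e \<Rightarrow> 'a \<Rightarrow> real) set \<Rightarrow> bool" where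
  "L0_seminorms M C P \<longleftrightarrow> (\<forall>p\<in>P.
     (\<forall>x \<omega>. p (x - x) \<omega> = 0) \<and>
     (\<forall>x y z \<omega>. p (x - z) \<omega> \<le> p (x - y) \<omega> + p (y - z) \<omega>) \<and>
     (\<forall>x\<in>C. \<forall>y\<in>C. p (x - y) \<in> borel_measurable M))"

lemma centre_in_T0_ball:
  assumes "L0_seminorms M C P" "finite N" "N \<subseteq> P" "r \<in> L0pp M" "x \<in> C"
  shows "x \<in> T0_ball M C N x r"
proof -
  have zero: "p (x - x) \<omega> = 0" if "p \<in> N" for p \<omega>
    using assms(1,3) that unfolding L0_seminorms_def by blast
  have "AE \<omega> in M. 0 < r \<omega>" using assms(4) unfolding L0pp_def by simp
  then have "AE \<omega> in M. sup_seminorms N (x - x) \<omega> < r \<omega>"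
    by eventually_elim (simp add: assms(2) zero sup_seminorms_less_iff)
  with assms(5) show ?thesis unfolding T0_ball_def by simp
qed

lemma T0_ball_Un_min:
  assumes "finite N1" "finite N2"
  shows "T0_ball M C (N1 \<union> N2) x (\<lambda>\<omega>. min (r1 \<omega>) (r2 \<omega>))
           \<subseteq> T0_ball M C N1 x r1 \<inter> T0_ball M C N2 x r2"
proof
  fix y assume "y \<in> T0_ball M C (N1 \<union> N2) x (\<lambda>\<omega>. min (r1 \<omega>) (r2 \<omega>))"
  then have "y \<in> C" and y: "AE \<omega> in M. sup_seminorms (N1 \<union> N2) (x - y) \<omega> < min (r1 \<omega>) (r2 \<omega>)"
    unfolding T0_ball_def by simp_all
  have "AE \<omega> in M. sup_seminorms N1 (x - y) \<omega> < r1 \<omega>"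
    using y by eventually_elim (use assms in \<open>simp add: sup_seminorms_less_iff\<close>)
  moreover have "AE \<omega> in M. sup_seminorms N2 (x - y) \<omega> < r2 \<omega>"
    using y by eventually_elim (use assms in \<open>simp add: sup_seminorms_less_iff\<close>)
  ultimately show "y \<in> T0_ball M C N1 x r1 \<inter> T0_ball M C N2 x r2"
    using \<open>y \<in> C\<close> unfolding T0_ball_def by simp
qed

lemma T0_ball_around_member:
  assumes "L0_seminorms M C P" "finite N" "N \<subseteq> P" "r \<in> L0pp M" "x \<in> C"
    and y: "y \<in> T0_ball M C N x r"
  defines "r' \<equiv> \<lambda>\<omega>. r \<omega> - sup_seminorms N (x - y) \<omega>"
  shows "r' \<in> L0pp M" and "T0_ball M C N y r' \<subseteq> T0_ball M C N x r"
proof -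
  have yC: "y \<in> C" and xy: "AE \<omega> in M. sup_seminorms N (x - y) \<omega> < r \<omega>"
    using y unfolding T0_ball_def by simp_all
  have "sup_seminorms N (x - y) \<in> borel_measurable M"
    using assms(1-3,5) yC
    by (intro borel_measurable_sup_seminorms) (auto simp: L0_seminorms_def)
  moreover have "r \<in> borel_measurable M" using assms(4) unfolding L0pp_def by simp
  moreover have "AE \<omega> in M. 0 < r' \<omega>"
    using xy by eventually_elim (simp add: r'_def)
  ultimately show "r' \<in> L0pp M" unfolding L0pp_def r'_def by simp
  show "T0_ball M C N y r' \<subseteq> T0_ball M C N x r"
  proof
    fix z assume "z \<in> T0_ball M C N y r'"
    then have zC: "z \<in> C" and yz: "AE \<omega> in M. sup_seminorms N (y - z) \<omega> < r' \<omega>"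
      unfolding T0_ball_def by simp_all
    have "AE \<omega> in M. sup_seminorms N (x - z) \<omega> < r \<omega>"
      using yz
    proof eventually_elim
      case (elim \<omega>)
      have "p (x - z) \<omega> < r \<omega>" if p: "p \<in> N" for p
      proof -
        have "p (x - z) \<omega> \<le> p (x - y) \<omega> + p (y - z) \<omega>"
          using assms(1,3) p unfolding L0_seminorms_def by blast
        moreover have "p (x - y) \<omega> \<le> sup_seminorms N (x - y) \<omega>"
          using sup_seminorms_ge(2)[OF assms(2) p] .
        moreover have "p (y - z) \<omega> < r' \<omega>"
          using elim p assms(2) by (simp add: sup_seminorms_less_iff)
        ultimately show ?thesis unfolding r'_def by linarith
      qed
      moreover have "0 < r \<omega>"
        using elim sup_seminorms_ge(1)[OF assms(2), of "x - y" \<omega>] assms(2)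
        by (simp add: sup_seminorms_less_iff r'_def)
      ultimately show ?case using assms(2) by (simp add: sup_seminorms_less_iff)
    qed
    with zC show "z \<in> T0_ball M C N x r" unfolding T0_ball_def by simp
  qed
qed

lemma openin_T0_iff:
  assumes "L0_seminorms M C P"
  shows "openin (T0 M C P) U \<longleftrightarrow> U \<subseteq> C \<and>
    (\<forall>y\<in>U. \<exists>N r. finite N \<and> N \<subseteq> P \<and> r \<in> L0pp M \<and> T0_ball M C N y r \<subseteq> U)"
    (is "_ \<longleftrightarrow> _ \<and> (\<forall>y\<in>U. ?nbhd U y)")
proof
  assume "openin (T0 M C P) U"
  then have "U \<subseteq> C" using openin_subset[of "T0 M C P" U] unfolding topspace_T0 by simp
  moreover have "\<forall>y\<in>U. ?nbhd U y"
    using \<open>openin (T0 M C P) U\<close>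
    unfolding T0_eq_generated_by_balls openin_topology_generated_by_iff
  proof (induction rule: generate_topology_on.induct)
    case Empty
    show ?case by (rule ballI) (erule emptyE)
  next
    case (Int a b)
    show ?case
    proof
      fix y assume y: "y \<in> a \<inter> b"
      obtain N1 r1 where
        N1: "finite N1" "N1 \<subseteq> P" "r1 \<in> L0pp M" "T0_ball M C N1 y r1 \<subseteq> a"
        using bspec[OF Int.IH(1) IntD1[OF y]] by (elim exE conjE)
      obtain N2 r2 where
        N2: "finite N2" "N2 \<subseteq> P" "r2 \<in> L0pp M" "T0_ball M C N2 y r2 \<subseteq> b"
        using bspec[OF Int.IH(2) IntD2[OF y]] by (elim exE conjE)
      have "T0_ball M C (N1 \<union> N2) y (\<lambda>\<omega>. min (r1 \<omega>) (r2 \<omega>)) \<subseteq> a \<inter> b"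
        by (rule subset_trans[OF T0_ball_Un_min[OF N1(1) N2(1)] Int_mono[OF N1(4) N2(4)]])
      then show "?nbhd (a \<inter> b) y"
        by (intro exI[of _ "N1 \<union> N2"] exI[of _ "\<lambda>\<omega>. min (r1 \<omega>) (r2 \<omega>)"] conjI
            L0pp_min N1(3) N2(3)) (simp_all add: N1(1,2) N2(1,2))
    qed
  next
    case (UN K)
    show ?case
    proof
      fix y assume "y \<in> \<Union>K"
      then obtain k where "y \<in> k" "k \<in> K" ..
      obtain N r where ball: "finite N" "N \<subseteq> P" "r \<in> L0pp M" "T0_ball M C N y r \<subseteq> k"
        using bspec[OF UN.IH[OF \<open>k \<in> K\<close>] \<open>y \<in> k\<close>] by (elim exE conjE)
      show "?nbhd (\<Union>K) y"
        by (intro exI[of _ N] exI[of _ r] conjI ball(1-3)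
            subset_trans[OF ball(4) Union_upper[OF \<open>k \<in> K\<close>]])
    qed
  next
    case (Basis s)
    then obtain x N r where s: "s = T0_ball M C N x r"
      and ball: "x \<in> C" "finite N" "N \<subseteq> P" "r \<in> L0pp M"
      by (elim CollectE exE conjE)
    show ?case
    proof
      fix y assume "y \<in> s"
      note around = T0_ball_around_member[OF assms ball(2-4,1), of y, folded s, OF \<open>y \<in> s\<close>]
      show "?nbhd s y"
        by (intro exI[of _ N] exI[of _ "\<lambda>\<omega>. r \<omega> - sup_seminorms N (x - y) \<omega>"] conjI ball(2,3)
            around)
    qed
  qed
  ultimately show "U \<subseteq> C \<and> (\<forall>y\<in>U. ?nbhd U y)" ..
next
  assume "U \<subseteq> C \<and> (\<forall>y\<in>U. ?nbhd U y)"
  then have UC: "U \<subseteq> C" and nbhd: "\<forall>y\<in>U. ?nbhd U y" by simp_all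
  show "openin (T0 M C P) U"
  proof (subst openin_subopen, intro ballI)
    fix y assume "y \<in> U"
    obtain N r where ball: "finite N" "N \<subseteq> P" "r \<in> L0pp M" "T0_ball M C N y r \<subseteq> U"
      using bspec[OF nbhd \<open>y \<in> U\<close>] by (elim exE conjE)
    show "\<exists>B. openin (T0 M C P) B \<and> y \<in> B \<and> B \<subseteq> U"
      by (intro exI[of _ "T0_ball M C N y r"] conjI openin_T0_ball centre_in_T0_ball[OF assms]
          ball subsetD[OF UC \<open>y \<in> U\<close>])
  qed
qed

lemma openin_T0_ballE:
  assumes "L0_seminorms M C P" "openin (T0 M C P) U" "y \<in> U"
  obtains N r where "finite N" "N \<subseteq> P" "r \<in> L0pp M" "T0_ball M C N y r \<subseteq> U"
  using bspec[OF conjunct2[OF openin_T0_iff[OF assms(1), THEN iffD1, OF assms(2)]] assms(3)]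
  by (elim exE conjE) (rule that)

lemma continuous_map_T0_iff:
  assumes P: "L0_seminorms M C P" and Q: "L0_seminorms M D Q"
  shows "continuous_map (T0 M C P) (T0 M D Q) f \<longleftrightarrow> f ` C \<subseteq> D \<and>
    (\<forall>x\<in>C. \<forall>N r. finite N \<and> N \<subseteq> Q \<and> r \<in> L0pp M \<longrightarrow>
      (\<exists>N' r'. finite N' \<and> N' \<subseteq> P \<and> r' \<in> L0pp M \<and>
         f ` T0_ball M C N' x r' \<subseteq> T0_ball M D N (f x) r))"
    (is "_ \<longleftrightarrow> _ \<and> (\<forall>x\<in>C. \<forall>N r. ?ball N r \<longrightarrow> ?ex x N r)")
proof
  assume cont: "continuous_map (T0 M C P) (T0 M D Q) f"
  have fC: "f ` C \<subseteq> D"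
    using continuous_map_image_subset_topspace[OF cont] unfolding topspace_T0 .
  have "?ex x N r" if x: "x \<in> C" and ball: "finite N" "N \<subseteq> Q" "r \<in> L0pp M" for x N r
  proof -
    have fx: "f x \<in> D" using subsetD[OF fC imageI[OF x]] .
    have "openin (T0 M C P) {y \<in> C. f y \<in> T0_ball M D N (f x) r}"
      using openin_continuous_map_preimage[OF cont openin_T0_ball[OF fx ball]]
      unfolding topspace_T0 .
    moreover have "x \<in> {y \<in> C. f y \<in> T0_ball M D N (f x) r}"
      using x centre_in_T0_ball[OF Q ball fx] by simp
    ultimately obtain N' r' where ball': "finite N'" "N' \<subseteq> P" "r' \<in> L0pp M"
        "T0_ball M C N' x r' \<subseteq> {y \<in> C. f y \<in> T0_ball M D N (f x) r}"
      by (rule openin_T0_ballE[OF P])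
    show ?thesis
      by (intro exI[of _ N'] exI[of _ r'] conjI ball'(1-3)) (use ball'(4) in auto)
  qed
  with fC show "f ` C \<subseteq> D \<and> (\<forall>x\<in>C. \<forall>N r. ?ball N r \<longrightarrow> ?ex x N r)" by simp
next
  assume H: "f ` C \<subseteq> D \<and> (\<forall>x\<in>C. \<forall>N r. ?ball N r \<longrightarrow> ?ex x N r)"
  show "continuous_map (T0 M C P) (T0 M D Q) f"
    unfolding continuous_map topspace_T0
  proof (intro conjI allI impI)
    show "f ` C \<subseteq> D" using H ..
    fix V assume V: "openin (T0 M D Q) V"
    show "openin (T0 M C P) {x \<in> C. f x \<in> V}"
      unfolding openin_T0_iff[OF P]
    proof (intro conjI ballI)
      fix x assume x: "x \<in> {x \<in> C. f x \<in> V}"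
      obtain N r where ball: "finite N" "N \<subseteq> Q" "r \<in> L0pp M" "T0_ball M D N (f x) r \<subseteq> V"
        using x by (auto elim: openin_T0_ballE[OF Q V])
      obtain N' r' where ball': "finite N'" "N' \<subseteq> P" "r' \<in> L0pp M"
          "f ` T0_ball M C N' x r' \<subseteq> T0_ball M D N (f x) r"
        using conjunct2[OF H, rule_format, of x N r] x ball(1-3) by auto
      show "\<exists>N' r'. finite N' \<and> N' \<subseteq> P \<and> r' \<in> L0pp M \<and>
          T0_ball M C N' x r' \<subseteq> {x \<in> C. f x \<in> V}"
        by (intro exI[of _ N'] exI[of _ r'] conjI ball'(1-3))
          (use ball(4) ball'(4) T0_ball_subset[of M C N' x r'] in auto)
    qed auto
  qed
qed

section \<open>Continuous L0-linear functionals on sequences\<close>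

definition coord_abs :: "nat \<Rightarrow> (nat \<Rightarrow> 'a \<Rightarrow> real) \<Rightarrow> 'a \<Rightarrow> real" where
  "coord_abs k = (\<lambda>x \<omega>. \<bar>x k \<omega>\<bar>)"

lemma Pseq_eq_range_coord_abs: "Pseq = range coord_abs"
  unfolding Pseq_def coord_abs_def by auto

lemma L0_seminorms_Pseq: "L0_seminorms M (Eseq M) Pseq"
  unfolding L0_seminorms_def Pseq_eq_range_coord_abs coord_abs_def Eseq_def
  by (auto intro!: borel_measurable_abs borel_measurable_diff)

lemma L0_seminorms_absL0: "L0_seminorms M (borel_measurable M) {absL0}"
  unfolding L0_seminorms_def absL0_def by auto

lemma mem_T0_ball_coord_abs:
  "finite K \<Longrightarrow> z \<in> T0_ball M C (coord_abs ` K) y r \<longleftrightarrow>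
     z \<in> C \<and> (AE \<omega> in M. 0 < r \<omega> \<and> (\<forall>k\<in>K. \<bar>y k \<omega> - z k \<omega>\<bar> < r \<omega>))"
  by (simp add: T0_ball_def sup_seminorms_less_iff coord_abs_def)

lemma mem_T0_ball_absL0:
  "z \<in> T0_ball M C {absL0} y r \<longleftrightarrow> z \<in> C \<and> (AE \<omega> in M. \<bar>y \<omega> - z \<omega>\<bar> < r \<omega>)"
proof -
  have "AE \<omega> in M. 0 < r \<omega>" if "AE \<omega> in M. \<bar>y \<omega> - z \<omega>\<bar> < r \<omega>"
    using that by eventually_elim (meson abs_ge_zero le_less_trans)
  then show ?thesis by (auto simp: T0_ball_def sup_seminorms_less_iff absL0_def)
qed

lemma Eseq_lincomb:
  assumes "r \<in> borel_measurable M" "s \<in> borel_measurable M" "y \<in> Eseq M" "z \<in> Eseq M"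
  shows "(\<lambda>n \<omega>. r \<omega> * y n \<omega> + s \<omega> * z n \<omega>) \<in> Eseq M"
  using assms unfolding Eseq_def by (auto intro!: borel_measurable_add borel_measurable_times)

lemma L0linear_scale:
  assumes "L0linear M f" "y \<in> Eseq M"
  shows "AE \<omega> in M. f (\<lambda>n \<omega>. c * y n \<omega>) \<omega> = c * f y \<omega>"
proof -
  have "AE \<omega> in M. f (\<lambda>n \<omega>'. c * y n \<omega>' + 0 * y n \<omega>') \<omega> = c * f y \<omega> + 0 * f y \<omega>"
    by (rule assms(1)[unfolded L0linear_def, rule_format, of "\<lambda>_. c" "\<lambda>_. 0" y y])
      (simp_all add: assms(2))
  then show ?thesis by simp
qed

lemma L0linear_zero:
  assumes "L0linear M f"
  shows "AE \<omega> in M. f (\<lambda>n \<omega>. 0) \<omega> = 0"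
  using L0linear_scale[OF assms, of "\<lambda>n \<omega>. 0" 0] by (simp add: Eseq_def)

lemma AE_eq_0_if_multiples_bounded:
  assumes "\<And>j::nat. AE \<omega> in M. real j * \<bar>g \<omega>\<bar> < 1"
  shows "AE \<omega> in M. g \<omega> = 0"
proof -
  have "AE \<omega> in M. \<forall>j::nat. real j * \<bar>g \<omega>\<bar> < 1"
    unfolding AE_all_countable using assms ..
  then show ?thesis
  proof eventually_elim
    case (elim \<omega>)
    show "g \<omega> = 0"
    proof (rule ccontr)
      assume "g \<omega> \<noteq> 0"
      then obtain j :: nat where "1 < real j * \<bar>g \<omega>\<bar>"
        using ex_less_of_nat_mult[of "\<bar>g \<omega>\<bar>" 1] by force
      with spec[OF elim, of j] show False by linarith
    qed
  qed
qed

lemma dual0_bounded_on_tails: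
  assumes "f \<in> dual0 M"
  shows "\<exists>m. \<forall>w\<in>Eseq M. (\<forall>n<m. w n = (\<lambda>_. 0)) \<longrightarrow> (AE \<omega> in M. \<bar>f w \<omega>\<bar> < 1)"
proof -
  have lin: "L0linear M f"
    and cont: "continuous_map (T0 M (Eseq M) Pseq) (T0 M (borel_measurable M) {absL0}) f"
    using assms unfolding dual0_def by simp_all
  define zero :: "nat \<Rightarrow> 'a \<Rightarrow> real" where "zero = (\<lambda>n \<omega>. 0)"
  have zero: "zero \<in> Eseq M" unfolding zero_def Eseq_def by simp
  note cont_iff =
    continuous_map_T0_iff[OF L0_seminorms_Pseq L0_seminorms_absL0, THEN iffD1, OF cont]
  obtain N r where N: "finite N" "N \<subseteq> Pseq" "r \<in> L0pp M" and ball: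
      "f ` T0_ball M (Eseq M) N zero r \<subseteq> T0_ball M (borel_measurable M) {absL0} (f zero) (\<lambda>_. 1)"
    using conjunct2[OF cont_iff, rule_format, of zero "{absL0}" "\<lambda>_. 1"] zero L0pp_const[of 1 M]
    by auto
  obtain K where K: "finite K" "N = coord_abs ` K"
    using finite_subset_image[OF N(1) N(2)[unfolded Pseq_eq_range_coord_abs]] by auto
  obtain m where m: "K \<subseteq> {..<m}" using finite_nat_bounded[OF K(1)] ..
  show ?thesis
  proof (intro exI[of _ m] ballI impI)
    fix w assume w: "w \<in> Eseq M" and tail: "\<forall>n<m. w n = (\<lambda>_. 0)"
    have wK: "\<forall>k\<in>K. w k = (\<lambda>_. 0)" using m tail by auto
    have "AE \<omega> in M. 0 < r \<omega>" using N(3) unfolding L0pp_def by simp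
    then have "AE \<omega> in M. 0 < r \<omega> \<and> (\<forall>k\<in>K. \<bar>zero k \<omega> - w k \<omega>\<bar> < r \<omega>)"
      by eventually_elim (simp add: wK zero_def)
    then have "w \<in> T0_ball M (Eseq M) N zero r"
      unfolding K(2) mem_T0_ball_coord_abs[OF K(1)] using w by simp
    then have "f w \<in> T0_ball M (borel_measurable M) {absL0} (f zero) (\<lambda>_. 1)"
      using ball by (rule subsetD[OF _ imageI, rotated])
    then have "AE \<omega> in M. \<bar>f zero \<omega> - f w \<omega>\<bar> < 1"
      unfolding mem_T0_ball_absL0 by simp
    moreover have "AE \<omega> in M. f zero \<omega> = 0"
      using L0linear_zero[OF lin] unfolding zero_def .
    ultimately show "AE \<omega> in M. \<bar>f w \<omega>\<bar> < 1" by eventually_elim simp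
  qed
qed

lemma dual0_vanishes_on_tails:
  assumes "f \<in> dual0 M"
  shows "\<exists>m. \<forall>y\<in>Eseq M. (\<forall>n<m. y n = (\<lambda>_. 0)) \<longrightarrow> (AE \<omega> in M. f y \<omega> = 0)"
proof -
  have lin: "L0linear M f" using assms unfolding dual0_def by simp
  obtain m where bounded:
    "\<forall>w\<in>Eseq M. (\<forall>n<m. w n = (\<lambda>_. 0)) \<longrightarrow> (AE \<omega> in M. \<bar>f w \<omega>\<bar> < 1)"
    using dual0_bounded_on_tails[OF assms] ..
  show ?thesis
  proof (intro exI[of _ m] ballI impI)
    fix y assume y: "y \<in> Eseq M" and tail: "\<forall>n<m. y n = (\<lambda>_. 0)"
    have "AE \<omega> in M. real j * \<bar>f y \<omega>\<bar> < 1" for j :: nat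
    proof -
      let ?w = "\<lambda>n \<omega>. real j * y n \<omega>"
      have w: "?w \<in> Eseq M" using y unfolding Eseq_def by (auto intro!: borel_measurable_times)
      have "\<forall>n<m. ?w n = (\<lambda>_. 0)" using tail by simp
      then have "AE \<omega> in M. \<bar>f ?w \<omega>\<bar> < 1" by (rule mp[OF bspec[OF bounded w]])
      moreover have "AE \<omega> in M. f ?w \<omega> = real j * f y \<omega>" using L0linear_scale[OF lin y] .
      ultimately show ?thesis by eventually_elim (simp add: abs_mult)
    qed
    then show "AE \<omega> in M. f y \<omega> = 0" by (rule AE_eq_0_if_multiples_bounded)
  qed
qed

definition unit_seq :: "nat \<Rightarrow> nat \<Rightarrow> 'a \<Rightarrow> real" where
  "unit_seq n = (\<lambda>k \<omega>. if k = n then 1 else 0)"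

definition tail_seq :: "nat \<Rightarrow> (nat \<Rightarrow> 'a \<Rightarrow> real) \<Rightarrow> nat \<Rightarrow> 'a \<Rightarrow> real" where
  "tail_seq j y = (\<lambda>n. if n < j then (\<lambda>_. 0) else y n)"

lemma unit_seq_in_Eseq: "unit_seq n \<in> Eseq M"
  unfolding unit_seq_def Eseq_def by simp

lemma tail_seq_in_Eseq: "y \<in> Eseq M \<Longrightarrow> tail_seq j y \<in> Eseq M"
  unfolding tail_seq_def Eseq_def by simp

text \<open>Stated in the shape \<open>r y + s z\<close> that L0linear speaks about.\<close>
lemma tail_seq_Suc:
  "tail_seq j y = (\<lambda>k \<omega>. y j \<omega> * unit_seq j k \<omega> + 1 * tail_seq (Suc j) y k \<omega>)"
  unfolding tail_seq_def unit_seq_def by (auto simp: fun_eq_iff less_Suc_eq)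

lemma L0linear_expansion:
  assumes lin: "L0linear M f" and y: "y \<in> Eseq M"
  shows "AE \<omega> in M. f y \<omega> = (\<Sum>n<j. f (unit_seq n) \<omega> * y n \<omega>) + f (tail_seq j y) \<omega>"
proof (induction j)
  case 0
  have "tail_seq 0 y = y" unfolding tail_seq_def by simp
  then show ?case by simp
next
  case (Suc j)
  have "y j \<in> borel_measurable M" using y unfolding Eseq_def by simp
  then have "AE \<omega> in M. f (tail_seq j y) \<omega> =
      y j \<omega> * f (unit_seq j) \<omega> + 1 * f (tail_seq (Suc j) y) \<omega>"
    unfolding tail_seq_Suc[of j y]
    by (intro lin[unfolded L0linear_def, rule_format, of "y j" "\<lambda>_. 1" "unit_seq j"
          "tail_seq (Suc j) y"] borel_measurable_const unit_seq_in_Eseq tail_seq_in_Eseq y)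
  with Suc.IH show ?case by eventually_elim (simp add: algebra_simps)
qed

lemma dual0_imp_finite_sum:
  assumes "f \<in> dual0 M"
  shows "\<exists>m x. (\<forall>n<m. x n \<in> borel_measurable M) \<and>
    (\<forall>y\<in>Eseq M. AE \<omega> in M. f y \<omega> = (\<Sum>n<m. x n \<omega> * y n \<omega>))"
proof -
  have lin: "L0linear M f"
    and cont: "continuous_map (T0 M (Eseq M) Pseq) (T0 M (borel_measurable M) {absL0}) f"
    using assms unfolding dual0_def by simp_all
  have meas: "f ` Eseq M \<subseteq> borel_measurable M"
    using continuous_map_image_subset_topspace[OF cont] unfolding topspace_T0 .
  obtain m where tail: "\<forall>y\<in>Eseq M. (\<forall>n<m. y n = (\<lambda>_. 0)) \<longrightarrow> (AE \<omega> in M. f y \<omega> = 0)"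
    using dual0_vanishes_on_tails[OF assms] ..
  have "AE \<omega> in M. f y \<omega> = (\<Sum>n<m. f (unit_seq n) \<omega> * y n \<omega>)" if y: "y \<in> Eseq M" for y
  proof -
    have "AE \<omega> in M. f (tail_seq m y) \<omega> = 0"
      using tail tail_seq_in_Eseq[OF y] by (simp add: tail_seq_def)
    with L0linear_expansion[OF lin y, of m] show ?thesis by eventually_elim simp
  qed
  moreover have "f (unit_seq n) \<in> borel_measurable M" for n
    using subsetD[OF meas imageI[OF unit_seq_in_Eseq]] .
  ultimately show ?thesis
    by (intro exI[of _ m] exI[of _ "\<lambda>n. f (unit_seq n)"]) simp
qed

lemma finite_sum_L0linear:
  fixes M :: "'a measure"
  assumes f: "\<forall>y\<in>Eseq M. AE \<omega> in M. f y \<omega> = (\<Sum>n<m. x n \<omega> * y n \<omega>)"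
  shows "L0linear M f"
  unfolding L0linear_def
proof (intro ballI)
  fix r s :: "'a \<Rightarrow> real" and y z :: "nat \<Rightarrow> 'a \<Rightarrow> real"
  assume r: "r \<in> borel_measurable M" and s: "s \<in> borel_measurable M"
    and y: "y \<in> Eseq M" and z: "z \<in> Eseq M"
  show "AE \<omega> in M. f (\<lambda>n \<omega>'. r \<omega>' * y n \<omega>' + s \<omega>' * z n \<omega>') \<omega> = r \<omega> * f y \<omega> + s \<omega> * f z \<omega>"
    using bspec[OF f Eseq_lincomb[OF r s y z]] bspec[OF f y] bspec[OF f z]
    by eventually_elim (simp add: sum_distrib_left sum.distrib algebra_simps)
qed

lemma abs_sum_mult_less:
  fixes c a :: "nat \<Rightarrow> real"
  assumes "0 < d" "\<forall>n<m. \<bar>a n\<bar> < d"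
  shows "\<bar>\<Sum>n<m. c n * a n\<bar> < d * (1 + (\<Sum>n<m. \<bar>c n\<bar>))"
proof -
  have "\<bar>\<Sum>n<m. c n * a n\<bar> \<le> (\<Sum>n<m. \<bar>c n\<bar> * \<bar>a n\<bar>)"
    by (rule order_trans[OF sum_abs]) (simp add: abs_mult)
  also have "\<dots> \<le> (\<Sum>n<m. \<bar>c n\<bar> * d)"
    using assms(2) by (intro sum_mono mult_left_mono) auto
  also have "\<dots> = d * (\<Sum>n<m. \<bar>c n\<bar>)" by (simp add: sum_distrib_left mult.commute)
  also have "\<dots> < d * (1 + (\<Sum>n<m. \<bar>c n\<bar>))" using assms(1) by simp
  finally show ?thesis .
qed

lemma finite_sum_continuous:
  fixes M :: "'a measure"
  assumes x: "\<forall>n<m. x n \<in> borel_measurable M"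
    and meas: "\<forall>y\<in>Eseq M. f y \<in> borel_measurable M"
    and f: "\<forall>y\<in>Eseq M. AE \<omega> in M. f y \<omega> = (\<Sum>n<m. x n \<omega> * y n \<omega>)"
  shows "continuous_map (T0 M (Eseq M) Pseq) (T0 M (borel_measurable M) {absL0}) f"
  unfolding continuous_map_T0_iff[OF L0_seminorms_Pseq L0_seminorms_absL0]
proof (intro conjI ballI allI impI)
  show "f ` Eseq M \<subseteq> borel_measurable M" using meas by auto
  fix y :: "nat \<Rightarrow> 'a \<Rightarrow> real" and N :: "(('a \<Rightarrow> real) \<Rightarrow> 'a \<Rightarrow> real) set"
    and \<epsilon> :: "'a \<Rightarrow> real"
  assume y: "y \<in> Eseq M" and N: "finite N \<and> N \<subseteq> {absL0} \<and> \<epsilon> \<in> L0pp M"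
  define \<delta> where "\<delta> = (\<lambda>\<omega>. \<epsilon> \<omega> / (1 + (\<Sum>n<m. \<bar>x n \<omega>\<bar>)))"
  have pos: "0 < 1 + (\<Sum>n<m. \<bar>x n \<omega>\<bar>)" for \<omega> by (simp add: add_pos_nonneg sum_nonneg)
  have "(\<lambda>\<omega>. 1 + (\<Sum>n<m. \<bar>x n \<omega>\<bar>)) \<in> borel_measurable M"
    by (intro borel_measurable_add borel_measurable_const borel_measurable_sum borel_measurable_abs)
      (use x in auto)
  with N pos have \<delta>: "\<delta> \<in> L0pp M" unfolding \<delta>_def by (intro L0pp_divide) auto
  have "f ` T0_ball M (Eseq M) (coord_abs ` {..<m}) y \<delta>
      \<subseteq> T0_ball M (borel_measurable M) {absL0} (f y) \<epsilon>"
  proof (rule image_subsetI)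
    fix z assume "z \<in> T0_ball M (Eseq M) (coord_abs ` {..<m}) y \<delta>"
    then have z: "z \<in> Eseq M"
      and yz: "AE \<omega> in M. 0 < \<delta> \<omega> \<and> (\<forall>k<m. \<bar>y k \<omega> - z k \<omega>\<bar> < \<delta> \<omega>)"
      unfolding mem_T0_ball_coord_abs[OF finite_lessThan] by auto
    have "AE \<omega> in M. \<bar>f y \<omega> - f z \<omega>\<bar> < \<epsilon> \<omega>"
      using yz bspec[OF f y] bspec[OF f z]
    proof eventually_elim
      case (elim \<omega>)
      have "\<bar>f y \<omega> - f z \<omega>\<bar> = \<bar>\<Sum>n<m. x n \<omega> * (y n \<omega> - z n \<omega>)\<bar>"
        using elim by (simp add: sum_subtractf right_diff_distrib)
      also have "\<dots> < \<delta> \<omega> * (1 + (\<Sum>n<m. \<bar>x n \<omega>\<bar>))"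
        using elim(1) by (intro abs_sum_mult_less) auto
      also have "\<dots> = \<epsilon> \<omega>" unfolding \<delta>_def using pos[of \<omega>] by simp
      finally show ?case .
    qed
    with z meas show "f z \<in> T0_ball M (borel_measurable M) {absL0} (f y) \<epsilon>"
      unfolding mem_T0_ball_absL0 by simp
  qed
  also have "\<dots> \<subseteq> T0_ball M (borel_measurable M) N (f y) \<epsilon>"
    using N by (intro T0_ball_antimono) auto
  finally show "\<exists>N' r'. finite N' \<and> N' \<subseteq> Pseq \<and> r' \<in> L0pp M \<and>
      f ` T0_ball M (Eseq M) N' y r' \<subseteq> T0_ball M (borel_measurable M) N (f y) \<epsilon>"
    using \<delta> by (intro exI[of _ "coord_abs ` {..<m}"] exI[of _ \<delta>] conjI)
      (auto simp: Pseq_eq_range_coord_abs)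
qed

theorem mainTheorem5:
  fixes M :: "'a measure" and f :: "(nat \<Rightarrow> 'a \<Rightarrow> real) \<Rightarrow> 'a \<Rightarrow> real"
  assumes "prob_space M"
    and "\<forall>y \<in> Eseq M. f y \<in> borel_measurable M"
    and "\<forall>y \<in> Eseq M. \<forall>z \<in> Eseq M. (\<forall>n. AE \<omega> in M. y n \<omega> = z n \<omega>) \<longrightarrow> (AE \<omega> in M. f y \<omega> = f z \<omega>)"
  shows "f \<in> dual0 M \<longleftrightarrow>
    (\<exists>(m::nat) (x::nat \<Rightarrow> 'a \<Rightarrow> real). (\<forall>n<m. x n \<in> borel_measurable M) \<and>
       (\<forall>y \<in> Eseq M. AE \<omega> in M. f y \<omega> = (\<Sum>n<m. x n \<omega> * y n \<omega>)))"
proof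
  assume "f \<in> dual0 M"
  then show "\<exists>m x. (\<forall>n<m. x n \<in> borel_measurable M) \<and>
      (\<forall>y\<in>Eseq M. AE \<omega> in M. f y \<omega> = (\<Sum>n<m. x n \<omega> * y n \<omega>))"
    by (rule dual0_imp_finite_sum)
next
  assume "\<exists>m x. (\<forall>n<m. x n \<in> borel_measurable M) \<and>
      (\<forall>y\<in>Eseq M. AE \<omega> in M. f y \<omega> = (\<Sum>n<m. x n \<omega> * y n \<omega>))"
  then obtain m x where x: "\<forall>n<m. x n \<in> borel_measurable M"
    and f: "\<forall>y\<in>Eseq M. AE \<omega> in M. f y \<omega> = (\<Sum>n<m. x n \<omega> * y n \<omega>)"
    by blast
  show "f \<in> dual0 M"
    unfolding dual0_def using finite_sum_L0linear[OF f] finite_sum_continuous[OF x assms(2) f]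
    by simp
qed

end
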